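(* Let $2\le r<s$ be coprime integers and let $\pi=\langle u,v\mid u^r=v^s\rangle$ be the group of the $(r,s)$ torus knot, with meridian $m=u^nv^{-k}$ and longitude $l=v^s m^{-rs}$, where $k,n\in\mathbb{Z}$ satisfy $-rk+sn=1$. Let $X,Y\in H[\pi]$ be the images of $m,l$. Then $Y\in H^+[\pi][X^{\pm1}]$; i.e. every torus knot satisfies the Brumfiel–Hilden condition.
   Context: For a group $\pi$, the Brumfiel–Hilden algebra is $H[\pi]:=\mathbb{C}[\pi]/I$, where $I$ is the two-sided ideal of the group algebra generated by all elements $g(h+h^{-1})-(h+h^{-1})g$ with $g,h\in\pi$. $H^+[\pi]\subset H[\pi]$ is the subalgebra generated by the images of all $g+g^{-1}$, $g\in\pi$. For an element $X\in H[\pi]$ which is the image of a group element, $H^+[\pi][X^{\pm1}]$ denotes the subalgebra of $H[\pi]$ generated by $H^+[\pi]$, $X$ and $X^{-1}$. A knot $K\subset S^3$ with group $\pi=\pi_1(S^3\setminus K)$ and standard (commuting) meridian $m$ and longitude $l$ is said to satisfy the Brumfiel–Hilden condition if the image $Y$ of $l$ in $H[\pi]$ lies in $H^+[\pi][X^{\pm1}]$, where $X$ is the image of $m$. The element $m$ does not depend on the choice of the solution $(k,n)$. *)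

theory Defs
  imports Complex_Main "HOL-Algebra.Group"
begin

type_synonym 'g galg = "'g \<Rightarrow> complex"

definition ga_elems :: "('g, 'b) monoid_scheme \<Rightarrow> 'g galg set" where
  "ga_elems G = {f. finite {x. f x \<noteq> 0} \<and> (\<forall>x. x \<notin> carrier G \<longrightarrow> f x = 0)}"

definition ga_delta :: "'g \<Rightarrow> 'g galg" where
  "ga_delta g = (\<lambda>x. if x = g then 1 else 0)"

definition ga_zero :: "'g galg" where
  "ga_zero = (\<lambda>x. 0)"

definition ga_add :: "'g galg \<Rightarrow> 'g galg \<Rightarrow> 'g galg" where
  "ga_add f h = (\<lambda>x. f x + h x)"

definition ga_smult :: "complex \<Rightarrow> 'g galg \<Rightarrow> 'g galg" where
  "ga_smult c f = (\<lambda>x. c * f x)"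

definition ga_mult :: "('g, 'b) monoid_scheme \<Rightarrow> 'g galg \<Rightarrow> 'g galg \<Rightarrow> 'g galg" where
  "ga_mult G f h = (\<lambda>x. \<Sum>(y, z) \<in> {(y, z). f y \<noteq> 0 \<and> h z \<noteq> 0 \<and> y \<otimes>\<^bsub>G\<^esub> z = x}. f y * h z)"

definition ga_plusinv :: "('g, 'b) monoid_scheme \<Rightarrow> 'g \<Rightarrow> 'g galg" where
  "ga_plusinv G g = ga_add (ga_delta g) (ga_delta (inv\<^bsub>G\<^esub> g))"

definition bh_gens :: "('g, 'b) monoid_scheme \<Rightarrow> 'g galg set" where
  "bh_gens G = {ga_add (ga_mult G (ga_delta g) (ga_plusinv G h))
                       (ga_smult (-1) (ga_mult G (ga_plusinv G h) (ga_delta g))) | g h.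
                g \<in> carrier G \<and> h \<in> carrier G}"

inductive_set ga_ideal :: "('g, 'b) monoid_scheme \<Rightarrow> 'g galg set \<Rightarrow> 'g galg set"
  for G :: "('g, 'b) monoid_scheme" and S :: "'g galg set" where
  zero: "ga_zero \<in> ga_ideal G S"
| gen: "x \<in> S \<Longrightarrow> x \<in> ga_ideal G S"
| add: "x \<in> ga_ideal G S \<Longrightarrow> y \<in> ga_ideal G S \<Longrightarrow> ga_add x y \<in> ga_ideal G S"
| lmult: "a \<in> ga_elems G \<Longrightarrow> x \<in> ga_ideal G S \<Longrightarrow> ga_mult G a x \<in> ga_ideal G S"
| rmult: "a \<in> ga_elems G \<Longrightarrow> x \<in> ga_ideal G S \<Longrightarrow> ga_mult G x a \<in> ga_ideal G S"

definition bh_ideal :: "('g, 'b) monoid_scheme \<Rightarrow> 'g galg set" where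
  "bh_ideal G = ga_ideal G (bh_gens G)"

definition bh_class :: "('g, 'b) monoid_scheme \<Rightarrow> 'g galg \<Rightarrow> 'g galg set" where
  "bh_class G f = {ga_add f i | i. i \<in> bh_ideal G}"

definition bh_carrier :: "('g, 'b) monoid_scheme \<Rightarrow> 'g galg set set" where
  "bh_carrier G = bh_class G ` ga_elems G"

definition bh_add :: "('g, 'b) monoid_scheme \<Rightarrow> 'g galg set \<Rightarrow> 'g galg set \<Rightarrow> 'g galg set" where
  "bh_add G A B = bh_class G (ga_add (SOME a. a \<in> A) (SOME b. b \<in> B))"

definition bh_mult :: "('g, 'b) monoid_scheme \<Rightarrow> 'g galg set \<Rightarrow> 'g galg set \<Rightarrow> 'g galg set" where
  "bh_mult G A B = bh_class G (ga_mult G (SOME a. a \<in> A) (SOME b. b \<in> B))"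

definition bh_smult :: "('g, 'b) monoid_scheme \<Rightarrow> complex \<Rightarrow> 'g galg set \<Rightarrow> 'g galg set" where
  "bh_smult G c A = bh_class G (ga_smult c (SOME a. a \<in> A))"

definition bh_one :: "('g, 'b) monoid_scheme \<Rightarrow> 'g galg set" where
  "bh_one G = bh_class G (ga_delta \<one>\<^bsub>G\<^esub>)"

inductive_set alg_gen :: "('a \<Rightarrow> 'a \<Rightarrow> 'a) \<Rightarrow> ('a \<Rightarrow> 'a \<Rightarrow> 'a) \<Rightarrow> (complex \<Rightarrow> 'a \<Rightarrow> 'a)
                          \<Rightarrow> 'a \<Rightarrow> 'a set \<Rightarrow> 'a set"
  for add :: "'a \<Rightarrow> 'a \<Rightarrow> 'a" and mult :: "'a \<Rightarrow> 'a \<Rightarrow> 'a" and smult :: "complex \<Rightarrow> 'a \<Rightarrow> 'a"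
    and one :: 'a and S :: "'a set" where
  gen: "x \<in> S \<Longrightarrow> x \<in> alg_gen add mult smult one S"
| one: "one \<in> alg_gen add mult smult one S"
| add: "x \<in> alg_gen add mult smult one S \<Longrightarrow> y \<in> alg_gen add mult smult one S
          \<Longrightarrow> add x y \<in> alg_gen add mult smult one S"
| mult: "x \<in> alg_gen add mult smult one S \<Longrightarrow> y \<in> alg_gen add mult smult one S
          \<Longrightarrow> mult x y \<in> alg_gen add mult smult one S"
| smult: "x \<in> alg_gen add mult smult one S \<Longrightarrow> smult c x \<in> alg_gen add mult smult one S"

definition bh_subalg :: "('g, 'b) monoid_scheme \<Rightarrow> 'g galg set set \<Rightarrow> 'g galg set set" where
  "bh_subalg G S = alg_gen (bh_add G) (bh_mult G) (bh_smult G) (bh_one G) S"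

definition bh_plus :: "('g, 'b) monoid_scheme \<Rightarrow> 'g galg set set" where
  "bh_plus G = bh_subalg G {bh_class G (ga_plusinv G g) | g. g \<in> carrier G}"

definition bh_condition :: "('g, 'b) monoid_scheme \<Rightarrow> 'g \<Rightarrow> 'g \<Rightarrow> bool" where
  "bh_condition G m l \<longleftrightarrow>
     bh_class G (ga_delta l) \<in>
       bh_subalg G (bh_plus G \<union> {bh_class G (ga_delta m), bh_class G (ga_delta (inv\<^bsub>G\<^esub> m))})"

text \<open>Words: letters (gen, inverted) with gen False = u, True = v.\<close>
type_synonym tk_word = "(bool \<times> bool) list"

definition tk_u :: "bool \<times> bool" where "tk_u = (False, False)"
definition tk_v :: "bool \<times> bool" where "tk_v = (True, False)"

definition tk_invl :: "bool \<times> bool \<Rightarrow> bool \<times> bool" where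
  "tk_invl x = (fst x, \<not> snd x)"

definition tk_winv :: "tk_word \<Rightarrow> tk_word" where
  "tk_winv w = rev (map tk_invl w)"

definition tk_lpow :: "bool \<times> bool \<Rightarrow> int \<Rightarrow> tk_word" where
  "tk_lpow x i = (if 0 \<le> i then replicate (nat i) x else replicate (nat (- i)) (tk_invl x))"

inductive tk_rel :: "nat \<Rightarrow> nat \<Rightarrow> tk_word \<Rightarrow> tk_word \<Rightarrow> bool" for r s :: nat where
  refl: "tk_rel r s w w"
| sym: "tk_rel r s w w' \<Longrightarrow> tk_rel r s w' w"
| trans: "tk_rel r s w w' \<Longrightarrow> tk_rel r s w' w'' \<Longrightarrow> tk_rel r s w w''"
| cancel: "tk_rel r s (a @ [x, tk_invl x] @ b) (a @ b)"
| relator: "tk_rel r s (a @ replicate r tk_u @ b) (a @ replicate s tk_v @ b)"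

definition tk_class :: "nat \<Rightarrow> nat \<Rightarrow> tk_word \<Rightarrow> tk_word set" where
  "tk_class r s w = {w'. tk_rel r s w w'}"

definition torus_knot_group :: "nat \<Rightarrow> nat \<Rightarrow> tk_word set monoid" where
  "torus_knot_group r s =
     \<lparr> carrier = range (tk_class r s),
       mult = (\<lambda>A B. tk_class r s ((SOME a. a \<in> A) @ (SOME b. b \<in> B))),
       one = tk_class r s [] \<rparr>"

definition tk_meridian_word :: "int \<Rightarrow> int \<Rightarrow> tk_word" where
  "tk_meridian_word k n = tk_lpow tk_u n @ tk_lpow tk_v (- k)"

definition tk_longitude_word :: "nat \<Rightarrow> nat \<Rightarrow> int \<Rightarrow> int \<Rightarrow> tk_word" where
  "tk_longitude_word r s k n =
     replicate s tk_v @ concat (replicate (r * s) (tk_winv (tk_meridian_word k n)))"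

end

theory Submission
  imports Defs "HOL-Algebra.Subrings"
begin

text \<open>In H[pi] every trace t_g = g + g^-1 commutes with all group elements. Let U, V be the images
  of u, v and p_j the Chebyshev polynomials in t_u with U^j = p_j U - p_(j-1). Then
  p_r U = U^r + p_(r-1) = V^s + p_(r-1) commutes with V, and as U^-1 = t_u - U and V^-1 = t_v - V
  this gives p_r U^a V^b = p_r V^b U^a for all integers a, b. For the meridian image
  X = U^n V^-k and sn - rk = 1 it follows that p_r X^s = p_r U^(ns) V^(-ks) = p_r U, so the
  longitude image is Y = U^r X^(-rs) = (p_r X^s - p_(r-1)) X^(-rs), a polynomial in traces and X^(+-1).\<close>

section \<open>The torus knot group as a group\<close>

declare tk_rel.trans [trans]

lemma tk_rel_in_context:
  assumes "tk_rel r s w w'"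
  shows "tk_rel r s (a @ w @ b) (a @ w' @ b)"
  using assms
proof (induction arbitrary: a b rule: tk_rel.induct)
  case (cancel c x d)
  show ?case
    using tk_rel.cancel[of r s "a @ c" x "d @ b"] by simp
next
  case (relator c d)
  show ?case
    using tk_rel.relator[of r s "a @ c" "d @ b"] by simp
qed (blast intro: tk_rel.intros)+

lemma tk_rel_append:
  assumes "tk_rel r s w w'" "tk_rel r s x x'"
  shows "tk_rel r s (w @ x) (w' @ x')"
  using tk_rel_in_context[OF assms(1), of "[]" x] tk_rel_in_context[OF assms(2), of w' "[]"]
  by (auto intro: tk_rel.trans)

lemma tk_class_eq_iff: "tk_class r s w = tk_class r s w' \<longleftrightarrow> tk_rel r s w w'"
  unfolding tk_class_def by (auto intro: tk_rel.intros)

lemma tk_rel_some_class: "tk_rel r s w (SOME a. a \<in> tk_class r s w)"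
proof -
  have "(SOME a. a \<in> tk_class r s w) \<in> tk_class r s w"
    by (rule someI[of _ w]) (simp add: tk_class_def tk_rel.refl)
  then show ?thesis by (simp add: tk_class_def)
qed

abbreviation TK :: "nat \<Rightarrow> nat \<Rightarrow> tk_word set monoid" where
  "TK r s \<equiv> torus_knot_group r s"

lemma tk_class_mult: "tk_class r s a \<otimes>\<^bsub>TK r s\<^esub> tk_class r s b = tk_class r s (a @ b)"
  unfolding torus_knot_group_def tk_class_eq_iff
  by (simp add: tk_rel_append tk_rel_some_class tk_rel.sym tk_class_eq_iff)

lemma tk_one: "\<one>\<^bsub>TK r s\<^esub> = tk_class r s []"
  by (simp add: torus_knot_group_def)

lemma tk_carrier: "carrier (TK r s) = range (tk_class r s)"
  by (simp add: torus_knot_group_def)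

lemma tk_winv_winv [simp]: "tk_winv (tk_winv w) = w"
  by (simp add: tk_winv_def tk_invl_def rev_map comp_def)

lemma tk_rel_append_winv: "tk_rel r s (w @ tk_winv w) []"
proof (induction w)
  case Nil
  show ?case by (simp add: tk_winv_def tk_rel.refl)
next
  case (Cons x w)
  have "tk_rel r s ([x] @ (w @ tk_winv w) @ [tk_invl x]) ([x] @ [] @ [tk_invl x])"
    by (rule tk_rel_in_context[OF Cons])
  also have "tk_rel r s \<dots> []"
    using tk_rel.cancel[of r s "[]" x "[]"] by simp
  finally show ?case
    by (simp add: tk_winv_def)
qed

lemma tk_rel_winv_append: "tk_rel r s (tk_winv w @ w) []"
  using tk_rel_append_winv[of r s "tk_winv w"] by simp

lemma torus_knot_group_is_group: "group (TK r s)"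
proof (rule groupI)
  fix x assume "x \<in> carrier (TK r s)"
  then obtain w where w: "x = tk_class r s w" by (auto simp: tk_carrier)
  have "tk_class r s (tk_winv w) \<otimes>\<^bsub>TK r s\<^esub> x = \<one>\<^bsub>TK r s\<^esub>"
    unfolding w tk_class_mult tk_one tk_class_eq_iff by (rule tk_rel_winv_append)
  then show "\<exists>y\<in>carrier (TK r s). y \<otimes>\<^bsub>TK r s\<^esub> x = \<one>\<^bsub>TK r s\<^esub>"
    by (auto simp: tk_carrier)
qed (auto simp: tk_carrier tk_one tk_class_mult)

lemma tk_class_inv: "inv\<^bsub>TK r s\<^esub> (tk_class r s w) = tk_class r s (tk_winv w)"
proof (rule group.inv_equality[OF torus_knot_group_is_group])
  show "tk_class r s (tk_winv w) \<otimes>\<^bsub>TK r s\<^esub> tk_class r s w = \<one>\<^bsub>TK r s\<^esub>"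
    unfolding tk_class_mult tk_one tk_class_eq_iff by (rule tk_rel_winv_append)
qed (simp_all add: tk_carrier)

lemma tk_class_concat_replicate:
  "tk_class r s (concat (replicate j w)) = tk_class r s w [^]\<^bsub>TK r s\<^esub> (j::nat)"
proof (induction j)
  case (Suc j)
  have "concat (replicate j w) @ w = w @ concat (replicate j w)"
    by (induction j) auto
  with Suc show ?case
    by (metis tk_class_mult concat_replicate_trivial nat_pow_Suc replicate_Suc concat.simps(2))
qed (simp add: tk_one)

lemma tk_class_replicate: "tk_class r s (replicate j x) = tk_class r s [x] [^]\<^bsub>TK r s\<^esub> (j::nat)"
  using tk_class_concat_replicate[of r s j "[x]"] by simp

lemma tk_class_lpow: "tk_class r s (tk_lpow x i) = tk_class r s [x] [^]\<^bsub>TK r s\<^esub> i"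
proof -
  interpret group "TK r s" by (rule torus_knot_group_is_group)
  have "tk_class r s [x] \<in> carrier (TK r s)" by (simp add: tk_carrier)
  then show ?thesis
    by (simp add: tk_lpow_def int_pow_def2 nat_pow_inv tk_class_inv tk_winv_def
        flip: tk_class_replicate)
qed

lemma tk_defining_relation:
  "tk_class r s [tk_u] [^]\<^bsub>TK r s\<^esub> r = tk_class r s [tk_v] [^]\<^bsub>TK r s\<^esub> s"
  using tk_rel.relator[of r s "[]" "[]"] by (simp add: tk_class_eq_iff flip: tk_class_replicate)

lemma tk_meridian_class:
  "tk_class r s (tk_meridian_word k n) =
     tk_class r s [tk_u] [^]\<^bsub>TK r s\<^esub> n \<otimes>\<^bsub>TK r s\<^esub> tk_class r s [tk_v] [^]\<^bsub>TK r s\<^esub> (- k)"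
  by (simp add: tk_meridian_word_def tk_class_lpow flip: tk_class_mult)

lemma tk_longitude_class:
  "tk_class r s (tk_longitude_word r s k n) =
     tk_class r s [tk_v] [^]\<^bsub>TK r s\<^esub> s \<otimes>\<^bsub>TK r s\<^esub>
       (inv\<^bsub>TK r s\<^esub> tk_class r s (tk_meridian_word k n)) [^]\<^bsub>TK r s\<^esub> (r * s)"
  by (simp add: tk_longitude_word_def tk_class_inv tk_class_concat_replicate
      flip: tk_class_mult tk_class_replicate)

section \<open>The complex group algebra as a ring\<close>

definition ga_supp :: "'g galg \<Rightarrow> 'g set" where
  "ga_supp f = {x. f x \<noteq> 0}"

definition ga_ring :: "('g, 'b) monoid_scheme \<Rightarrow> 'g galg ring" where
  "ga_ring G = \<lparr>carrier = ga_elems G, mult = ga_mult G, one = ga_delta \<one>\<^bsub>G\<^esub>,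
                zero = ga_zero, add = ga_add\<rparr>"

lemma ga_ring_simps [simp]:
  "carrier (ga_ring G) = ga_elems G" "mult (ga_ring G) = ga_mult G"
  "one (ga_ring G) = ga_delta \<one>\<^bsub>G\<^esub>" "zero (ga_ring G) = ga_zero" "add (ga_ring G) = ga_add"
  by (simp_all add: ga_ring_def)

lemma ga_delta_apply [simp]: "ga_delta g x = (if x = g then 1 else 0)"
  by (simp add: ga_delta_def)

lemma ga_elems_iff: "f \<in> ga_elems G \<longleftrightarrow> finite (ga_supp f) \<and> ga_supp f \<subseteq> carrier G"
  by (auto simp: ga_elems_def ga_supp_def)

lemma ga_supp_delta: "ga_supp (ga_delta g) \<subseteq> {g}"
  by (auto simp: ga_supp_def)

lemma ga_mult_eq_sum:
  assumes "finite A" "ga_supp f \<subseteq> A" "finite B" "ga_supp h \<subseteq> B"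
  shows "ga_mult G f h x = (\<Sum>y\<in>A. \<Sum>z\<in>B. if y \<otimes>\<^bsub>G\<^esub> z = x then f y * h z else 0)"
proof -
  have "(\<Sum>y\<in>A. \<Sum>z\<in>B. if y \<otimes>\<^bsub>G\<^esub> z = x then f y * h z else 0)
      = (\<Sum>(y,z)\<in>A \<times> B. if y \<otimes>\<^bsub>G\<^esub> z = x then f y * h z else 0)"
    by (rule sum.cartesian_product)
  also have "\<dots> = (\<Sum>(y, z) \<in> {(y, z). f y \<noteq> 0 \<and> h z \<noteq> 0 \<and> y \<otimes>\<^bsub>G\<^esub> z = x}. f y * h z)"
    by (rule sum.mono_neutral_cong_right) (use assms in \<open>auto simp: ga_supp_def split: if_splits\<close>)
  finally show ?thesis by (simp add: ga_mult_def)
qed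

lemma sum_if_eq_single:
  assumes "finite W" "p \<in> W"
  shows "(\<Sum>w\<in>W. if p = w \<and> P w then K w else 0) = (if P p then K p else 0)"
proof -
  have "(\<Sum>w\<in>W. if p = w \<and> P w then K w else 0) = (\<Sum>w\<in>W. if p = w then (if P w then K w else 0) else 0)"
    by (rule sum.cong) auto
  then show ?thesis using assms by (simp add: sum.delta)
qed

context group
begin

lemma ga_supp_mult: "ga_supp (ga_mult G f h) \<subseteq> (\<lambda>(y, z). y \<otimes> z) ` (ga_supp f \<times> ga_supp h)"
proof
  fix x assume "x \<in> ga_supp (ga_mult G f h)"
  then have "ga_mult G f h x \<noteq> 0" by (simp add: ga_supp_def)
  then have "{(y, z). f y \<noteq> 0 \<and> h z \<noteq> 0 \<and> y \<otimes> z = x} \<noteq> {}"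
    unfolding ga_mult_def by (metis (no_types, lifting) sum.empty)
  then show "x \<in> (\<lambda>(y, z). y \<otimes> z) ` (ga_supp f \<times> ga_supp h)"
    by (auto simp: ga_supp_def image_iff)
qed

lemma ga_mult_closed:
  assumes "f \<in> ga_elems G" "h \<in> ga_elems G"
  shows "ga_mult G f h \<in> ga_elems G"
proof -
  have f: "finite (ga_supp f)" "ga_supp f \<subseteq> carrier G"
    and h: "finite (ga_supp h)" "ga_supp h \<subseteq> carrier G"
    using assms by (simp_all add: ga_elems_iff)
  have "finite (ga_supp (ga_mult G f h))"
    using f h by (intro finite_subset[OF ga_supp_mult]) simp
  moreover have "ga_supp (ga_mult G f h) \<subseteq> carrier G"
    using ga_supp_mult[of f h] f h by fastforce
  ultimately show ?thesis by (simp add: ga_elems_iff)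
qed

lemma ga_add_closed: "f \<in> ga_elems G \<Longrightarrow> h \<in> ga_elems G \<Longrightarrow> ga_add f h \<in> ga_elems G"
proof -
  have "ga_supp (ga_add f h) \<subseteq> ga_supp f \<union> ga_supp h" by (auto simp: ga_supp_def ga_add_def)
  then show "f \<in> ga_elems G \<Longrightarrow> h \<in> ga_elems G \<Longrightarrow> ga_add f h \<in> ga_elems G"
    unfolding ga_elems_iff by (meson finite_Un finite_subset le_sup_iff order_trans)
qed

lemma ga_smult_closed: "f \<in> ga_elems G \<Longrightarrow> ga_smult c f \<in> ga_elems G"
proof -
  have "ga_supp (ga_smult c f) \<subseteq> ga_supp f" by (auto simp: ga_supp_def ga_smult_def)
  then show "f \<in> ga_elems G \<Longrightarrow> ga_smult c f \<in> ga_elems G"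
    unfolding ga_elems_iff by (meson finite_subset order_trans)
qed

lemma ga_zero_closed: "ga_zero \<in> ga_elems G"
  by (simp add: ga_elems_def ga_zero_def)

lemma ga_delta_closed: "g \<in> carrier G \<Longrightarrow> ga_delta g \<in> ga_elems G"
  by (simp add: ga_elems_def)

lemma ga_plusinv_closed: "g \<in> carrier G \<Longrightarrow> ga_plusinv G g \<in> ga_elems G"
  by (simp add: ga_plusinv_def ga_add_closed ga_delta_closed)

lemma ga_delta_mult:
  "g \<in> carrier G \<Longrightarrow> h \<in> carrier G \<Longrightarrow> ga_mult G (ga_delta g) (ga_delta h) = ga_delta (g \<otimes> h)"
  by (rule ext, subst ga_mult_eq_sum[where A="{g}" and B="{h}"]) (auto simp: ga_supp_delta)

lemma ga_mult_one_left: "f \<in> ga_elems G \<Longrightarrow> ga_mult G (ga_delta \<one>) f = f"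
proof (rule ext)
  fix x assume "f \<in> ga_elems G"
  then have fin: "finite (ga_supp f)" and sub: "ga_supp f \<subseteq> carrier G" by (auto simp: ga_elems_iff)
  have "ga_mult G (ga_delta \<one>) f x = (\<Sum>y\<in>{\<one>}. \<Sum>z\<in>ga_supp f. if y \<otimes> z = x then ga_delta \<one> y * f z else 0)"
    by (rule ga_mult_eq_sum) (simp_all add: fin ga_supp_delta)
  also have "\<dots> = (\<Sum>z\<in>ga_supp f. if \<one> \<otimes> z = x then f z else 0)"
    by (simp cong: if_cong)
  also have "\<dots> = (\<Sum>z\<in>ga_supp f. if x = z then f z else 0)"
    by (rule sum.cong) (use sub in auto)
  also have "\<dots> = f x" using fin by (simp add: sum.delta) (simp add: ga_supp_def)
  finally show "ga_mult G (ga_delta \<one>) f x = f x" .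
qed

lemma ga_mult_one_right: "f \<in> ga_elems G \<Longrightarrow> ga_mult G f (ga_delta \<one>) = f"
proof (rule ext)
  fix x assume "f \<in> ga_elems G"
  then have fin: "finite (ga_supp f)" and sub: "ga_supp f \<subseteq> carrier G" by (auto simp: ga_elems_iff)
  have "ga_mult G f (ga_delta \<one>) x = (\<Sum>z\<in>ga_supp f. \<Sum>y\<in>{\<one>}. if z \<otimes> y = x then f z * ga_delta \<one> y else 0)"
    by (rule ga_mult_eq_sum) (simp_all add: fin ga_supp_delta)
  also have "\<dots> = (\<Sum>z\<in>ga_supp f. if z \<otimes> \<one> = x then f z else 0)"
    by (simp cong: if_cong)
  also have "\<dots> = (\<Sum>z\<in>ga_supp f. if x = z then f z else 0)"
    by (rule sum.cong) (use sub in auto)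
  also have "\<dots> = f x" using fin by (simp add: sum.delta) (simp add: ga_supp_def)
  finally show "ga_mult G f (ga_delta \<one>) x = f x" .
qed

lemma ga_mult_add_left:
  assumes "f \<in> ga_elems G" "g \<in> ga_elems G" "h \<in> ga_elems G"
  shows "ga_mult G (ga_add f g) h = ga_add (ga_mult G f h) (ga_mult G g h)"
proof (rule ext)
  fix x
  have fin: "finite (ga_supp f \<union> ga_supp g)" "finite (ga_supp h)"
    using assms by (auto simp: ga_elems_iff)
  have sub: "ga_supp (ga_add f g) \<subseteq> ga_supp f \<union> ga_supp g" by (auto simp: ga_supp_def ga_add_def)
  show "ga_mult G (ga_add f g) h x = ga_add (ga_mult G f h) (ga_mult G g h) x"
    unfolding ga_add_def[of "ga_mult G f h"]
    by (subst (1 2 3) ga_mult_eq_sum[where A="ga_supp f \<union> ga_supp g" and B="ga_supp h"])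
      (use fin sub in \<open>auto simp: ga_add_def sum.distrib[symmetric] distrib_right intro!: sum.cong\<close>)
qed

lemma ga_mult_add_right:
  assumes "f \<in> ga_elems G" "g \<in> ga_elems G" "h \<in> ga_elems G"
  shows "ga_mult G h (ga_add f g) = ga_add (ga_mult G h f) (ga_mult G h g)"
proof (rule ext)
  fix x
  have fin: "finite (ga_supp f \<union> ga_supp g)" "finite (ga_supp h)"
    using assms by (auto simp: ga_elems_iff)
  have sub: "ga_supp (ga_add f g) \<subseteq> ga_supp f \<union> ga_supp g" by (auto simp: ga_supp_def ga_add_def)
  show "ga_mult G h (ga_add f g) x = ga_add (ga_mult G h f) (ga_mult G h g) x"
    unfolding ga_add_def[of "ga_mult G h f"]
    by (subst (1 2 3) ga_mult_eq_sum[where B="ga_supp f \<union> ga_supp g" and A="ga_supp h"])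
      (use fin sub in \<open>auto simp: ga_add_def sum.distrib[symmetric] distrib_left intro!: sum.cong\<close>)
qed

lemma ga_smult_mult_left:
  assumes "f \<in> ga_elems G" "h \<in> ga_elems G"
  shows "ga_mult G (ga_smult c f) h = ga_smult c (ga_mult G f h)"
proof (rule ext)
  fix x
  have fin: "finite (ga_supp f)" "finite (ga_supp h)" using assms by (auto simp: ga_elems_iff)
  have sub: "ga_supp (ga_smult c f) \<subseteq> ga_supp f" by (auto simp: ga_supp_def ga_smult_def)
  show "ga_mult G (ga_smult c f) h x = ga_smult c (ga_mult G f h) x"
    unfolding ga_smult_def[of c "ga_mult G f h"]
    by (subst (1 2) ga_mult_eq_sum[where A="ga_supp f" and B="ga_supp h"])
      (use fin sub in \<open>auto simp: ga_smult_def sum_distrib_left mult.assoc intro!: sum.cong\<close>)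
qed

lemma ga_mult_mult_left_eq_sum:
  assumes "f \<in> ga_elems G" "g \<in> ga_elems G" "h \<in> ga_elems G"
  shows "ga_mult G (ga_mult G f g) h x = (\<Sum>a\<in>ga_supp f. \<Sum>b\<in>ga_supp g. \<Sum>c\<in>ga_supp h.
           if a \<otimes> b \<otimes> c = x then f a * g b * h c else 0)"
proof -
  define A B C where "A = ga_supp f" and "B = ga_supp g" and "C = ga_supp h"
  define AB where "AB = (\<lambda>(y, z). y \<otimes> z) ` (A \<times> B)"
  have fin: "finite A" "finite B" "finite C" "finite AB"
    using assms by (auto simp: ga_elems_iff A_def B_def C_def AB_def)
  have AB_mem: "a \<otimes> b \<in> AB" if "a \<in> A" "b \<in> B" for a b
    using that by (auto simp: AB_def)
  have fg: "ga_mult G f g w = (\<Sum>a\<in>A. \<Sum>b\<in>B. if a \<otimes> b = w then f a * g b else 0)" for w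
    by (rule ga_mult_eq_sum) (use fin in \<open>simp_all add: A_def B_def\<close>)
  have "ga_mult G (ga_mult G f g) h x
      = (\<Sum>w\<in>AB. \<Sum>c\<in>C. if w \<otimes> c = x then ga_mult G f g w * h c else 0)"
    by (rule ga_mult_eq_sum) (use fin ga_supp_mult in \<open>simp_all add: AB_def A_def B_def C_def\<close>)
  also have "\<dots> = (\<Sum>w\<in>AB. \<Sum>c\<in>C. \<Sum>a\<in>A. \<Sum>b\<in>B.
                    if a \<otimes> b = w \<and> w \<otimes> c = x then f a * g b * h c else 0)"
    unfolding fg by (auto simp: sum_distrib_right intro!: sum.cong)
  also have "\<dots> = (\<Sum>a\<in>A. \<Sum>b\<in>B. \<Sum>c\<in>C. \<Sum>w\<in>AB.
                    if a \<otimes> b = w \<and> w \<otimes> c = x then f a * g b * h c else 0)"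
    by (simp only: sum.swap[where A = AB and B = C] sum.swap[where A = AB and B = A]
        sum.swap[where A = AB and B = B] sum.swap[where A = C and B = A] sum.swap[where A = C and B = B])
  also have "\<dots> = (\<Sum>a\<in>A. \<Sum>b\<in>B. \<Sum>c\<in>C. if a \<otimes> b \<otimes> c = x then f a * g b * h c else 0)"
    by (intro sum.cong HOL.refl) (simp add: sum_if_eq_single[OF fin(4) AB_mem])
  finally show ?thesis by (simp add: A_def B_def C_def)
qed

lemma ga_mult_mult_right_eq_sum:
  assumes "f \<in> ga_elems G" "g \<in> ga_elems G" "h \<in> ga_elems G"
  shows "ga_mult G f (ga_mult G g h) x = (\<Sum>a\<in>ga_supp f. \<Sum>b\<in>ga_supp g. \<Sum>c\<in>ga_supp h.
           if a \<otimes> (b \<otimes> c) = x then f a * (g b * h c) else 0)"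
proof -
  define A B C where "A = ga_supp f" and "B = ga_supp g" and "C = ga_supp h"
  define BC where "BC = (\<lambda>(y, z). y \<otimes> z) ` (B \<times> C)"
  have fin: "finite A" "finite B" "finite C" "finite BC"
    using assms by (auto simp: ga_elems_iff A_def B_def C_def BC_def)
  have BC_mem: "b \<otimes> c \<in> BC" if "b \<in> B" "c \<in> C" for b c
    using that by (auto simp: BC_def)
  have gh: "ga_mult G g h w = (\<Sum>b\<in>B. \<Sum>c\<in>C. if b \<otimes> c = w then g b * h c else 0)" for w
    by (rule ga_mult_eq_sum) (use fin in \<open>simp_all add: C_def B_def\<close>)
  have "ga_mult G f (ga_mult G g h) x
      = (\<Sum>a\<in>A. \<Sum>w\<in>BC. if a \<otimes> w = x then f a * ga_mult G g h w else 0)"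
    by (rule ga_mult_eq_sum) (use fin ga_supp_mult in \<open>simp_all add: BC_def A_def B_def C_def\<close>)
  also have "\<dots> = (\<Sum>a\<in>A. \<Sum>w\<in>BC. \<Sum>b\<in>B. \<Sum>c\<in>C.
                    if b \<otimes> c = w \<and> a \<otimes> w = x then f a * (g b * h c) else 0)"
    unfolding gh by (auto simp: sum_distrib_left intro!: sum.cong)
  also have "\<dots> = (\<Sum>a\<in>A. \<Sum>b\<in>B. \<Sum>c\<in>C. \<Sum>w\<in>BC.
                    if b \<otimes> c = w \<and> a \<otimes> w = x then f a * (g b * h c) else 0)"
    by (simp only: sum.swap[where A = BC and B = B] sum.swap[where A = BC and B = C])
  also have "\<dots> = (\<Sum>a\<in>A. \<Sum>b\<in>B. \<Sum>c\<in>C. if a \<otimes> (b \<otimes> c) = x then f a * (g b * h c) else 0)"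
    by (intro sum.cong HOL.refl) (simp add: sum_if_eq_single[OF fin(4) BC_mem])
  finally show ?thesis by (simp add: A_def B_def C_def)
qed

lemma ga_mult_assoc:
  assumes "f \<in> ga_elems G" "g \<in> ga_elems G" "h \<in> ga_elems G"
  shows "ga_mult G (ga_mult G f g) h = ga_mult G f (ga_mult G g h)"
proof (rule ext)
  fix x
  have "ga_supp f \<subseteq> carrier G" "ga_supp g \<subseteq> carrier G" "ga_supp h \<subseteq> carrier G"
    using assms by (simp_all add: ga_elems_iff)
  then show "ga_mult G (ga_mult G f g) h x = ga_mult G f (ga_mult G g h) x"
    unfolding ga_mult_mult_left_eq_sum[OF assms] ga_mult_mult_right_eq_sum[OF assms]
    by (intro sum.cong HOL.refl) (auto simp: m_assoc mult.assoc subsetD)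
qed

end

section \<open>The Brumfiel--Hilden algebra as a quotient ring\<close>

context group
begin

lemma ga_ring_is_ring: "ring (ga_ring G)"
proof (rule ringI)
  show "abelian_group (ga_ring G)"
  proof (rule abelian_groupI)
    fix x y assume "x \<in> carrier (ga_ring G)" "y \<in> carrier (ga_ring G)"
    then show "x \<oplus>\<^bsub>ga_ring G\<^esub> y \<in> carrier (ga_ring G)" by (simp add: ga_add_closed)
  next
    show "\<zero>\<^bsub>ga_ring G\<^esub> \<in> carrier (ga_ring G)" by (simp add: ga_zero_closed)
  next
    fix x assume x: "x \<in> carrier (ga_ring G)"
    show "\<exists>y\<in>carrier (ga_ring G). y \<oplus>\<^bsub>ga_ring G\<^esub> x = \<zero>\<^bsub>ga_ring G\<^esub>"
      using x ga_smult_closed[of x "-1"] by (intro bexI[of _ "ga_smult (-1) x"])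
        (auto simp: ga_add_def ga_zero_def ga_smult_def)
  qed (simp_all add: ga_add_def ga_zero_def ac_simps)
next
  show "monoid (ga_ring G)"
    by (rule monoidI)
      (simp_all add: ga_mult_closed ga_delta_closed ga_mult_assoc ga_mult_one_left ga_mult_one_right)
qed (simp_all add: ga_mult_add_left ga_mult_add_right)

lemma ga_ring_minus: "f \<in> ga_elems G \<Longrightarrow> \<ominus>\<^bsub>ga_ring G\<^esub> f = ga_smult (-1) f"
  by (rule abelian_group.minus_equality[OF ring.is_abelian_group[OF ga_ring_is_ring]])
    (use ga_smult_closed[of f "-1"] in \<open>auto simp: ga_add_def ga_zero_def ga_smult_def\<close>)

lemma bh_gens_subset: "bh_gens G \<subseteq> ga_elems G"
  by (auto simp: bh_gens_def
      intro!: ga_add_closed ga_mult_closed ga_smult_closed ga_delta_closed ga_plusinv_closed)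

lemma bh_ideal_subset: "bh_ideal G \<subseteq> ga_elems G"
proof
  fix x assume "x \<in> bh_ideal G"
  then show "x \<in> ga_elems G"
    unfolding bh_ideal_def
    by (induction rule: ga_ideal.induct)
      (use bh_gens_subset in \<open>auto intro: ga_zero_closed ga_add_closed ga_mult_closed\<close>)
qed

lemma bh_ideal_is_ideal: "ideal (bh_ideal G) (ga_ring G)"
proof (rule idealI)
  interpret R: ring "ga_ring G" by (rule ga_ring_is_ring)
  show "ring (ga_ring G)" by (rule ga_ring_is_ring)
  show "subgroup (bh_ideal G) (add_monoid (ga_ring G))"
  proof (rule R.add.subgroupI)
    fix a assume a: "a \<in> bh_ideal G"
    then have "a \<in> ga_elems G" using bh_ideal_subset by blast
    then have "\<ominus>\<^bsub>ga_ring G\<^esub> a = ga_mult G (ga_smult (-1) (ga_delta \<one>)) a"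
      by (simp add: ga_ring_minus ga_smult_mult_left ga_delta_closed ga_mult_one_left)
    then show "\<ominus>\<^bsub>ga_ring G\<^esub> a \<in> bh_ideal G"
      using a unfolding bh_ideal_def by (simp add: ga_ideal.lmult ga_smult_closed ga_delta_closed)
  next
    show "bh_ideal G \<noteq> {}"
      using ga_ideal.zero[of G "bh_gens G"] by (auto simp: bh_ideal_def)
  qed (use bh_ideal_subset in \<open>auto simp: bh_ideal_def ga_ideal.add\<close>)
qed (simp_all add: bh_ideal_def ga_ideal.lmult ga_ideal.rmult)

lemma bh_class_eq_rcoset: "bh_class G f = bh_ideal G +>\<^bsub>ga_ring G\<^esub> f"
  unfolding bh_class_def a_r_coset_def' by (auto simp: ga_add_def add.commute)

abbreviation bh_quot :: "'a galg set ring" where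
  "bh_quot \<equiv> ga_ring G Quot bh_ideal G"

lemma bh_quot_is_ring: "ring bh_quot"
  using bh_ideal_is_ideal by (rule ideal.quotient_is_ring)

lemma bh_class_hom: "ring_hom_ring (ga_ring G) bh_quot (bh_class G)"
proof -
  have "bh_class G = (+>\<^bsub>ga_ring G\<^esub>) (bh_ideal G)"
    by (rule ext) (simp add: bh_class_eq_rcoset)
  then show ?thesis
    using ideal.rcos_ring_hom_ring[OF bh_ideal_is_ideal] by simp
qed

lemma bh_class_closed: "f \<in> ga_elems G \<Longrightarrow> bh_class G f \<in> carrier bh_quot"
  using ring_hom_ring.homh[OF bh_class_hom] by (auto simp: ring_hom_def)

lemma bh_class_some:
  assumes "A \<in> carrier bh_quot"
  shows "(SOME x. x \<in> A) \<in> ga_elems G" "bh_class G (SOME x. x \<in> A) = A"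
proof -
  interpret I: ideal "bh_ideal G" "ga_ring G" by (rule bh_ideal_is_ideal)
  obtain a where a: "a \<in> ga_elems G" "A = bh_ideal G +>\<^bsub>ga_ring G\<^esub> a"
    using assms by (auto simp: FactRing_def A_RCOSETS_def')
  then have "a \<in> A" using I.a_rcos_self by simp
  then have some: "(SOME x. x \<in> A) \<in> A" by (rule someI[where P = "\<lambda>x. x \<in> A"])
  moreover have "A \<subseteq> ga_elems G"
    using a I.a_subset by (auto simp: a_r_coset_def' intro: ga_add_closed)
  ultimately show "(SOME x. x \<in> A) \<in> ga_elems G" by blast
  have "bh_ideal G +>\<^bsub>ga_ring G\<^esub> a = bh_ideal G +>\<^bsub>ga_ring G\<^esub> (SOME x. x \<in> A)"
    by (rule I.a_repr_independence') (use some a in auto)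
  then show "bh_class G (SOME x. x \<in> A) = A" using a by (simp add: bh_class_eq_rcoset)
qed

lemma bh_add_eq:
  assumes "A \<in> carrier bh_quot" "B \<in> carrier bh_quot"
  shows "bh_add G A B = A \<oplus>\<^bsub>bh_quot\<^esub> B"
proof -
  interpret hom: ring_hom_ring "ga_ring G" bh_quot "bh_class G" by (rule bh_class_hom)
  show ?thesis
    using hom.hom_add[of "SOME x. x \<in> A" "SOME x. x \<in> B"] assms by (simp add: bh_add_def bh_class_some)
qed

lemma bh_mult_eq:
  assumes "A \<in> carrier bh_quot" "B \<in> carrier bh_quot"
  shows "bh_mult G A B = A \<otimes>\<^bsub>bh_quot\<^esub> B"
proof -
  interpret hom: ring_hom_ring "ga_ring G" bh_quot "bh_class G" by (rule bh_class_hom)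
  show ?thesis
    using hom.hom_mult[of "SOME x. x \<in> A" "SOME x. x \<in> B"] assms by (simp add: bh_mult_def bh_class_some)
qed

lemma bh_smult_minus_one:
  assumes "A \<in> carrier bh_quot"
  shows "bh_smult G (-1) A = \<ominus>\<^bsub>bh_quot\<^esub> A"
proof -
  interpret hom: ring_hom_ring "ga_ring G" bh_quot "bh_class G" by (rule bh_class_hom)
  show ?thesis
    using hom.hom_a_inv[of "SOME x. x \<in> A"] assms by (simp add: bh_smult_def bh_class_some ga_ring_minus)
qed

lemma bh_one_eq: "bh_one G = \<one>\<^bsub>bh_quot\<^esub>"
  by (simp add: bh_one_def bh_class_eq_rcoset FactRing_def)

lemma bh_subalg_subring: "subring (bh_subalg G T \<inter> carrier bh_quot) bh_quot"
proof (rule ring.subringI[OF bh_quot_is_ring])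
  show "\<one>\<^bsub>bh_quot\<^esub> \<in> bh_subalg G T \<inter> carrier bh_quot"
    using alg_gen.one ring.ring_simprules(6)[OF bh_quot_is_ring]
    by (auto simp: bh_subalg_def simp flip: bh_one_eq)
next
  fix A B assume "A \<in> bh_subalg G T \<inter> carrier bh_quot" "B \<in> bh_subalg G T \<inter> carrier bh_quot"
  then show "A \<otimes>\<^bsub>bh_quot\<^esub> B \<in> bh_subalg G T \<inter> carrier bh_quot"
    "A \<oplus>\<^bsub>bh_quot\<^esub> B \<in> bh_subalg G T \<inter> carrier bh_quot"
    using ring.ring_simprules(1,5)[OF bh_quot_is_ring, of A B]
    by (auto simp: bh_subalg_def alg_gen.mult alg_gen.add simp flip: bh_mult_eq bh_add_eq)
next
  fix A assume "A \<in> bh_subalg G T \<inter> carrier bh_quot"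
  then show "\<ominus>\<^bsub>bh_quot\<^esub> A \<in> bh_subalg G T \<inter> carrier bh_quot"
    using ring.ring_simprules(3)[OF bh_quot_is_ring, of A]
    by (auto simp: bh_subalg_def alg_gen.smult simp flip: bh_smult_minus_one)
qed auto

lemma bh_class_delta_mult:
  assumes "g \<in> carrier G" "h \<in> carrier G"
  shows "bh_class G (ga_delta (g \<otimes> h)) = bh_class G (ga_delta g) \<otimes>\<^bsub>bh_quot\<^esub> bh_class G (ga_delta h)"
proof -
  interpret hom: ring_hom_ring "ga_ring G" bh_quot "bh_class G" by (rule bh_class_hom)
  show ?thesis
    using hom.hom_mult[of "ga_delta g" "ga_delta h"] assms by (simp add: ga_delta_mult ga_delta_closed)
qed

lemma bh_class_plusinv:
  assumes "g \<in> carrier G"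
  shows "bh_class G (ga_plusinv G g) = bh_class G (ga_delta g) \<oplus>\<^bsub>bh_quot\<^esub> bh_class G (ga_delta (inv g))"
proof -
  interpret hom: ring_hom_ring "ga_ring G" bh_quot "bh_class G" by (rule bh_class_hom)
  show ?thesis
    using hom.hom_add[of "ga_delta g" "ga_delta (inv g)"] assms by (simp add: ga_plusinv_def ga_delta_closed)
qed

lemma bh_class_plusinv_central:
  assumes g: "g \<in> carrier G" and h: "h \<in> carrier G"
  shows "bh_class G (ga_delta h) \<otimes>\<^bsub>bh_quot\<^esub> bh_class G (ga_plusinv G g)
       = bh_class G (ga_plusinv G g) \<otimes>\<^bsub>bh_quot\<^esub> bh_class G (ga_delta h)"
proof -
  interpret R: ring "ga_ring G" by (rule ga_ring_is_ring)
  interpret Q: ring bh_quot by (rule bh_quot_is_ring)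
  interpret hom: ring_hom_ring "ga_ring G" bh_quot "bh_class G" by (rule bh_class_hom)
  define P d where "P = ga_plusinv G g" and "d = ga_delta h"
  have P: "P \<in> ga_elems G" and d: "d \<in> ga_elems G"
    using g h by (simp_all add: P_def d_def ga_plusinv_closed ga_delta_closed)
  have "ga_add (ga_mult G d P) (ga_smult (-1) (ga_mult G P d)) \<in> bh_ideal G"
    unfolding bh_ideal_def P_def d_def by (rule ga_ideal.gen) (use g h in \<open>auto simp: bh_gens_def\<close>)
  then have "d \<otimes>\<^bsub>ga_ring G\<^esub> P \<ominus>\<^bsub>ga_ring G\<^esub> P \<otimes>\<^bsub>ga_ring G\<^esub> d \<in> bh_ideal G"
    using P d by (simp add: a_minus_def ga_ring_minus ga_mult_closed)
  then have "bh_class G (d \<otimes>\<^bsub>ga_ring G\<^esub> P \<ominus>\<^bsub>ga_ring G\<^esub> P \<otimes>\<^bsub>ga_ring G\<^esub> d) = \<zero>\<^bsub>bh_quot\<^esub>"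
    by (simp add: bh_class_eq_rcoset R.a_rcos_zero[OF bh_ideal_is_ideal] FactRing_def)
  then have "bh_class G d \<otimes>\<^bsub>bh_quot\<^esub> bh_class G P \<ominus>\<^bsub>bh_quot\<^esub> bh_class G P \<otimes>\<^bsub>bh_quot\<^esub> bh_class G d
      = \<zero>\<^bsub>bh_quot\<^esub>"
    using P d hom.hom_add[of "ga_mult G d P" "\<ominus>\<^bsub>ga_ring G\<^esub> ga_mult G P d"]
      hom.hom_a_inv[of "ga_mult G P d"] hom.hom_mult[of d P] hom.hom_mult[of P d]
    by (simp add: a_minus_def ga_mult_closed ga_ring_minus ga_smult_closed)
  then show ?thesis
    using P d by (simp add: P_def d_def bh_class_closed)
qed

end

section \<open>Centralizers and Chebyshev polynomials in a ring\<close>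

text \<open>\<open>cheb R t j\<close> is the Chebyshev polynomial of the second kind U_(j-1)(t/2); for an invertible
  x with t = x + x^-1 it gives x^j = cheb t j * x - cheb t (j-1), see \<open>rep_pow_cheb\<close>.\<close>
fun cheb :: "('a, 'b) ring_scheme \<Rightarrow> 'a \<Rightarrow> nat \<Rightarrow> 'a" where
  "cheb R t 0 = \<zero>\<^bsub>R\<^esub>"
| "cheb R t (Suc 0) = \<one>\<^bsub>R\<^esub>"
| "cheb R t (Suc (Suc j)) = t \<otimes>\<^bsub>R\<^esub> cheb R t (Suc j) \<ominus>\<^bsub>R\<^esub> cheb R t j"

context ring
begin

lemma subring_nat_pow_closed: "subring S R \<Longrightarrow> x \<in> S \<Longrightarrow> x [^] (j::nat) \<in> S"
  by (induction j) (simp_all add: subringE)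

lemma cheb_mem_subring:
  assumes "subring S R" "t \<in> S"
  shows "cheb R t j \<in> S"
proof -
  have "cheb R t j \<in> S \<and> cheb R t (Suc j) \<in> S"
    by (induction j) (simp_all add: assms subringE minus_eq)
  then show ?thesis ..
qed

lemma cheb_closed: "t \<in> carrier R \<Longrightarrow> cheb R t j \<in> carrier R"
  using cheb_mem_subring[OF carrier_is_subring] .

definition centralizer :: "'a \<Rightarrow> 'a set" where
  "centralizer c = {x \<in> carrier R. c \<otimes> x = x \<otimes> c}"

lemma centralizer_subring:
  assumes "c \<in> carrier R"
  shows "subring (centralizer c) R"
proof (rule subringI)
  fix x y assume "x \<in> centralizer c" "y \<in> centralizer c"
  with assms show "x \<otimes> y \<in> centralizer c" "x \<oplus> y \<in> centralizer c"
    by (auto simp: centralizer_def l_distr r_distr) (metis m_assoc)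
next
  fix x assume "x \<in> centralizer c"
  with assms show "\<ominus> x \<in> centralizer c"
    by (simp add: centralizer_def l_minus r_minus)
qed (use assms in \<open>auto simp: centralizer_def\<close>)

lemma centralizer_sym: "x \<in> centralizer c \<Longrightarrow> c \<in> carrier R \<Longrightarrow> c \<in> centralizer x"
  by (simp add: centralizer_def)

definition scaled_centralizer :: "'a \<Rightarrow> 'a \<Rightarrow> 'a set" where
  "scaled_centralizer q y = {x \<in> centralizer q. q \<otimes> (x \<otimes> y) = q \<otimes> (y \<otimes> x)}"

lemma scaled_centralizer_subring:
  assumes q: "q \<in> carrier R" and y: "y \<in> carrier R"
  shows "subring (scaled_centralizer q y) R"
proof (rule subringI)
  fix x x' assume x: "x \<in> scaled_centralizer q y" and x': "x' \<in> scaled_centralizer q y"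
  then have c: "x \<in> carrier R" "x' \<in> carrier R" and qx: "q \<otimes> x = x \<otimes> q"
    and h: "q \<otimes> (x \<otimes> y) = q \<otimes> (y \<otimes> x)" "q \<otimes> (x' \<otimes> y) = q \<otimes> (y \<otimes> x')"
    by (auto simp: scaled_centralizer_def centralizer_def)
  have qx': "x \<otimes> (q \<otimes> z) = q \<otimes> (x \<otimes> z)" if "z \<in> carrier R" for z
    using c q that by (simp flip: m_assoc qx)
  have "q \<otimes> (x \<otimes> x' \<otimes> y) = x \<otimes> (q \<otimes> (x' \<otimes> y))"
    using c q y by (simp add: m_assoc qx')
  also have "\<dots> = q \<otimes> (x \<otimes> y) \<otimes> x'"
    using c q y by (simp add: h(2) m_assoc qx')
  also have "\<dots> = q \<otimes> (y \<otimes> (x \<otimes> x'))"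
    using c q y by (simp add: h(1) m_assoc)
  finally show "x \<otimes> x' \<in> scaled_centralizer q y"
    using x x' subringE(6)[OF centralizer_subring[OF q]]
    by (simp add: scaled_centralizer_def)
  have "q \<otimes> ((x \<oplus> x') \<otimes> y) = q \<otimes> (y \<otimes> (x \<oplus> x'))"
    using c q y h by (simp add: l_distr r_distr)
  then show "x \<oplus> x' \<in> scaled_centralizer q y"
    using x x' subringE(7)[OF centralizer_subring[OF q]]
    by (simp add: scaled_centralizer_def)
next
  fix x assume x: "x \<in> scaled_centralizer q y"
  then have "x \<in> carrier R" "q \<otimes> (x \<otimes> y) = q \<otimes> (y \<otimes> x)"
    by (auto simp: scaled_centralizer_def centralizer_def)
  then have "q \<otimes> (\<ominus> x \<otimes> y) = q \<otimes> (y \<otimes> \<ominus> x)"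
    using q y by (simp add: l_minus r_minus)
  then show "\<ominus> x \<in> scaled_centralizer q y"
    using x subringE(5)[OF centralizer_subring[OF q]]
    by (simp add: scaled_centralizer_def)
qed (use q y in \<open>auto simp: scaled_centralizer_def centralizer_def\<close>)

lemma scaled_centralizer_sym:
  "x \<in> scaled_centralizer q y \<Longrightarrow> y \<in> centralizer q \<Longrightarrow> y \<in> scaled_centralizer q x"
  by (simp add: scaled_centralizer_def)

lemma centralizer_in_scaled_centralizer:
  "x \<in> centralizer q \<Longrightarrow> x \<in> centralizer y \<Longrightarrow> x \<in> scaled_centralizer q y"
  by (simp add: scaled_centralizer_def centralizer_def)

lemma scaled_pow_mult_distrib:
  assumes q: "q \<in> carrier R" and x: "x \<in> centralizer q" and w: "w \<in> centralizer q"
    and xw: "x \<in> scaled_centralizer q w"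
  shows "q \<otimes> (x \<otimes> w) [^] (j::nat) = q \<otimes> (x [^] j \<otimes> w [^] j)"
proof (induction j)
  case (Suc j)
  have c: "x \<in> carrier R" "w \<in> carrier R" using x w by (simp_all add: centralizer_def)
  have "w [^] j \<in> scaled_centralizer q x"
    using scaled_centralizer_sym[OF xw w] c q
    by (intro subring_nat_pow_closed scaled_centralizer_subring)
  then have wj: "q \<otimes> (w [^] j \<otimes> x) = q \<otimes> (x \<otimes> w [^] j)"
    by (simp add: scaled_centralizer_def)
  have "q \<otimes> x [^] j = x [^] j \<otimes> q"
    using subring_nat_pow_closed[OF centralizer_subring[OF q] x, of j] by (simp add: centralizer_def)
  then have xj: "x [^] j \<otimes> (q \<otimes> z) = q \<otimes> (x [^] j \<otimes> z)" if "z \<in> carrier R" for z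
    using c q that by (simp flip: m_assoc)
  have "q \<otimes> (x \<otimes> w) [^] Suc j = (q \<otimes> (x \<otimes> w) [^] j) \<otimes> (x \<otimes> w)"
    using c q by (simp add: m_assoc)
  also have "\<dots> = x [^] j \<otimes> (q \<otimes> (w [^] j \<otimes> x) \<otimes> w)"
    using c q by (simp add: Suc m_assoc xj)
  also have "\<dots> = q \<otimes> (x [^] Suc j \<otimes> w [^] Suc j)"
    using c q by (simp add: wj m_assoc xj)
  finally show ?case .
qed simp

end

section \<open>Representations with central traces\<close>

locale central_trace_rep = ring R + Gr: group Gr for R (structure) and Gr :: "('g, 'c) monoid_scheme" +
  fixes \<phi> :: "'g \<Rightarrow> 'a"
  assumes rep_closed: "g \<in> carrier Gr \<Longrightarrow> \<phi> g \<in> carrier R"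
    and rep_mult: "g \<in> carrier Gr \<Longrightarrow> h \<in> carrier Gr \<Longrightarrow> \<phi> (g \<otimes>\<^bsub>Gr\<^esub> h) = \<phi> g \<otimes> \<phi> h"
    and rep_one: "\<phi> \<one>\<^bsub>Gr\<^esub> = \<one>"
    and trace_central: "g \<in> carrier Gr \<Longrightarrow> h \<in> carrier Gr \<Longrightarrow>
      \<phi> g \<oplus> \<phi> (inv\<^bsub>Gr\<^esub> g) \<in> centralizer (\<phi> h)"
begin

abbreviation trace :: "'g \<Rightarrow> 'a" where
  "trace g \<equiv> \<phi> g \<oplus> \<phi> (inv\<^bsub>Gr\<^esub> g)"

lemma trace_closed: "g \<in> carrier Gr \<Longrightarrow> trace g \<in> carrier R"
  by (simp add: rep_closed)

lemma rep_nat_pow: "g \<in> carrier Gr \<Longrightarrow> \<phi> (g [^]\<^bsub>Gr\<^esub> (j::nat)) = \<phi> g [^] j"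
  by (induction j) (simp_all add: rep_one rep_mult)

lemma trace_minus_rep: "g \<in> carrier Gr \<Longrightarrow> trace g \<ominus> \<phi> g = \<phi> (inv\<^bsub>Gr\<^esub> g)"
  using rep_closed[of g] rep_closed[of "inv\<^bsub>Gr\<^esub> g"] by simp algebra

lemma rep_int_pow_mem:
  assumes S: "subring S R" and g: "g \<in> carrier Gr" and "\<phi> g \<in> S" "\<phi> (inv\<^bsub>Gr\<^esub> g) \<in> S"
  shows "\<phi> (g [^]\<^bsub>Gr\<^esub> (i::int)) \<in> S"
proof (cases "i < 0")
  case True
  then have "g [^]\<^bsub>Gr\<^esub> i = inv\<^bsub>Gr\<^esub> (g [^]\<^bsub>Gr\<^esub> nat (- i))"
    by (subst int_pow_def2) simp
  also have "\<dots> = (inv\<^bsub>Gr\<^esub> g) [^]\<^bsub>Gr\<^esub> nat (- i)"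
    using g by (rule Gr.nat_pow_inv[symmetric])
  finally have "\<phi> (g [^]\<^bsub>Gr\<^esub> i) = \<phi> (inv\<^bsub>Gr\<^esub> g) [^] nat (- i)"
    using g by (simp only: rep_nat_pow Gr.inv_closed)
  then show ?thesis
    using subring_nat_pow_closed[OF S assms(4)] by simp
next
  case False
  then have "g [^]\<^bsub>Gr\<^esub> i = g [^]\<^bsub>Gr\<^esub> nat i"
    by (simp add: pow_nat)
  then have "\<phi> (g [^]\<^bsub>Gr\<^esub> i) = \<phi> g [^] nat i"
    using g by (simp only: rep_nat_pow)
  then show ?thesis
    using subring_nat_pow_closed[OF S assms(3)] by simp
qed

lemma cheb_trace_central:
  "g \<in> carrier Gr \<Longrightarrow> h \<in> carrier Gr \<Longrightarrow> cheb R (trace g) j \<in> centralizer (\<phi> h)"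
  by (intro cheb_mem_subring centralizer_subring rep_closed trace_central)

lemma rep_pow_cheb:
  assumes g: "g \<in> carrier Gr"
  shows "\<phi> g [^] Suc j = cheb R (trace g) (Suc j) \<otimes> \<phi> g \<ominus> cheb R (trace g) j"
proof (induction j)
  case 0
  show ?case using rep_closed[OF g] by simp algebra
next
  case (Suc j)
  let ?t = "trace g" and ?x = "\<phi> g"
  let ?p = "cheb R ?t (Suc j)" and ?p' = "cheb R ?t j"
  have c: "?x \<in> carrier R" "?t \<in> carrier R" "?p \<in> carrier R" "?p' \<in> carrier R"
    using g by (simp_all add: rep_closed cheb_closed)
  have "?t \<in> centralizer ?t"
    using c by (simp add: centralizer_def)
  then have tp: "?t \<otimes> ?p = ?p \<otimes> ?t"
    using cheb_mem_subring[OF centralizer_subring, of ?t ?t] c by (simp add: centralizer_def)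
  have "?x \<otimes> ?x = ?t \<otimes> ?x \<ominus> \<one>"
    using g c rep_closed[of "inv\<^bsub>Gr\<^esub> g"] rep_mult[of "inv\<^bsub>Gr\<^esub> g" g] rep_one
    by simp algebra
  then have "\<phi> g [^] Suc (Suc j) = ?p \<otimes> (?t \<otimes> ?x \<ominus> \<one>) \<ominus> ?p' \<otimes> ?x"
    using Suc c by simp algebra
  also have "\<dots> = (?t \<otimes> ?p \<ominus> ?p') \<otimes> ?x \<ominus> ?p"
    using c tp by algebra simp
  finally show ?case by simp
qed

lemma rep_inv_mem_scaled_centralizer:
  assumes q: "q \<in> carrier R" and q_central: "\<And>h. h \<in> carrier Gr \<Longrightarrow> \<phi> h \<in> centralizer q"
    and g: "g \<in> carrier Gr" and h: "h \<in> carrier Gr"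
    and gh: "\<phi> g \<in> scaled_centralizer q (\<phi> h)"
  shows "\<phi> (inv\<^bsub>Gr\<^esub> g) \<in> scaled_centralizer q (\<phi> h)"
proof -
  have S: "subring (scaled_centralizer q (\<phi> h)) R"
    using q h by (simp add: scaled_centralizer_subring rep_closed)
  have "trace g \<in> centralizer q"
    using subringE(7)[OF centralizer_subring[OF q] q_central[OF g] q_central[OF Gr.inv_closed[OF g]]] .
  then have tr: "trace g \<in> scaled_centralizer q (\<phi> h)"
    using trace_central[OF g h] by (rule centralizer_in_scaled_centralizer)
  have "\<phi> (inv\<^bsub>Gr\<^esub> g) = trace g \<oplus> \<ominus> \<phi> g"
    using trace_minus_rep[OF g] by (simp add: minus_eq)
  then show ?thesis
    using subringE(7)[OF S tr subringE(5)[OF S gh]] by simp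
qed

lemma rep_int_pows_scaled_commute:
  assumes q: "q \<in> carrier R" and q_central: "\<And>h. h \<in> carrier Gr \<Longrightarrow> \<phi> h \<in> centralizer q"
    and u: "u \<in> carrier Gr" and v: "v \<in> carrier Gr"
    and uv: "\<phi> u \<in> scaled_centralizer q (\<phi> v)"
  shows "\<phi> (u [^]\<^bsub>Gr\<^esub> (i::int)) \<in> scaled_centralizer q (\<phi> (v [^]\<^bsub>Gr\<^esub> (j::int)))"
proof -
  have "\<phi> (u [^]\<^bsub>Gr\<^esub> i) \<in> scaled_centralizer q (\<phi> v)"
    using scaled_centralizer_subring[OF q rep_closed[OF v]] u uv
      rep_inv_mem_scaled_centralizer[OF q q_central u v uv]
    by (rule rep_int_pow_mem)
  then have vu: "\<phi> v \<in> scaled_centralizer q (\<phi> (u [^]\<^bsub>Gr\<^esub> i))"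
    using v q_central by (simp add: scaled_centralizer_sym)
  have ui: "u [^]\<^bsub>Gr\<^esub> i \<in> carrier Gr" using u by simp
  have "\<phi> (v [^]\<^bsub>Gr\<^esub> j) \<in> scaled_centralizer q (\<phi> (u [^]\<^bsub>Gr\<^esub> i))"
    using scaled_centralizer_subring[OF q rep_closed[OF ui]] v vu
      rep_inv_mem_scaled_centralizer[OF q q_central v ui vu]
    by (rule rep_int_pow_mem)
  then show ?thesis
    using ui q_central by (simp add: scaled_centralizer_sym)
qed

end

lemma (in group) torus_meridian_pow:
  fixes r s :: nat and n k :: int
  assumes u: "u \<in> carrier G" and v: "v \<in> carrier G"
    and rel: "u [^] r = v [^] s" and bezout: "int s * n - int r * k = 1"
  shows "(u [^] n) [^] s \<otimes> (v [^] (- k)) [^] s = u"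
proof -
  have "(v [^] (- k)) [^] s = (v [^] int s) [^] (- k)"
    using v by (simp add: int_pow_pow mult.commute flip: int_pow_int)
  also have "\<dots> = (u [^] int r) [^] (- k)"
    by (simp add: int_pow_int rel)
  also have "\<dots> = u [^] (int r * (- k))"
    using u by (simp add: int_pow_pow)
  finally have "(u [^] n) [^] s \<otimes> (v [^] (- k)) [^] s = u [^] (n * int s) \<otimes> u [^] (int r * (- k))"
    using u by (simp add: int_pow_pow flip: int_pow_int)
  also have "\<dots> = u [^] (n * int s + int r * (- k))"
    using u by (rule int_pow_mult[symmetric])
  also have "n * int s + int r * (- k) = 1"
    using bezout by (simp add: algebra_simps)
  finally show ?thesis using u by simp
qed

context central_trace_rep
begin

lemma cheb_scaled_commute:
  fixes r s :: nat
  assumes u: "u \<in> carrier Gr" and v: "v \<in> carrier Gr"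
    and rel: "u [^]\<^bsub>Gr\<^esub> r = v [^]\<^bsub>Gr\<^esub> s" and r: "1 \<le> r"
  shows "\<phi> u \<in> scaled_centralizer (cheb R (trace u) r) (\<phi> v)"
proof -
  define p p' where "p = cheb R (trace u) r" and "p' = cheb R (trace u) (r - 1)"
  have C: "subring (centralizer (\<phi> v)) R"
    using v by (simp add: centralizer_subring rep_closed)
  have c: "p \<in> carrier R" "p' \<in> carrier R" "\<phi> u \<in> carrier R"
    using u by (simp_all add: p_def p'_def cheb_closed trace_closed rep_closed)
  have "\<phi> v [^] s = p \<otimes> \<phi> u \<ominus> p'"
    using rep_pow_cheb[OF u, of "r - 1"] r u v rel by (simp add: p_def p'_def flip: rep_nat_pow)
  then have pu: "p \<otimes> \<phi> u = \<phi> v [^] s \<oplus> p'"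
    using c by simp algebra
  have "\<phi> v \<in> centralizer (\<phi> v)"
    using v by (simp add: centralizer_def rep_closed)
  then have pu_v: "p \<otimes> \<phi> u \<in> centralizer (\<phi> v)"
    unfolding pu p'_def using u v
    by (intro subringE(7)[OF C] subring_nat_pow_closed[OF C] cheb_trace_central)
  have p_v: "p \<in> centralizer (\<phi> v)" and u_p: "\<phi> u \<in> centralizer p"
    using u v cheb_trace_central centralizer_sym c by (auto simp: p_def)
  have cv: "\<phi> v \<in> carrier R" using v by (rule rep_closed)
  have "p \<otimes> (\<phi> u \<otimes> \<phi> v) = \<phi> v \<otimes> (p \<otimes> \<phi> u)"
    using pu_v c cv by (simp add: centralizer_def m_assoc)
  also have "\<dots> = p \<otimes> (\<phi> v \<otimes> \<phi> u)"
    using p_v c cv by (simp add: centralizer_def flip: m_assoc)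
  finally show ?thesis
    using u_p by (simp add: scaled_centralizer_def p_def)
qed

lemma longitude_rep_mem_subring:
  fixes u v :: 'g and r s :: nat and n k :: int
  defines "m \<equiv> u [^]\<^bsub>Gr\<^esub> n \<otimes>\<^bsub>Gr\<^esub> v [^]\<^bsub>Gr\<^esub> (- k)"
  assumes u: "u \<in> carrier Gr" and v: "v \<in> carrier Gr"
    and rel: "u [^]\<^bsub>Gr\<^esub> r = v [^]\<^bsub>Gr\<^esub> s" and r: "1 \<le> r"
    and bezout: "int s * n - int r * k = 1"
    and S: "subring S R" and trace_u: "trace u \<in> S"
    and m: "\<phi> m \<in> S" and m_inv: "\<phi> (inv\<^bsub>Gr\<^esub> m) \<in> S"
  shows "\<phi> (v [^]\<^bsub>Gr\<^esub> s \<otimes>\<^bsub>Gr\<^esub> (inv\<^bsub>Gr\<^esub> m) [^]\<^bsub>Gr\<^esub> (r * s)) \<in> S"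
proof -
  define q p' x w where "q = cheb R (trace u) r" and "p' = cheb R (trace u) (r - 1)"
    and "x = \<phi> (u [^]\<^bsub>Gr\<^esub> n)" and "w = \<phi> (v [^]\<^bsub>Gr\<^esub> (- k))"
  have m_carrier: "m \<in> carrier Gr"
    using u v by (simp add: m_def)
  have q: "q \<in> carrier R"
    using u by (simp add: q_def cheb_closed trace_closed)
  have q_central: "\<phi> h \<in> centralizer q" if "h \<in> carrier Gr" for h
    using centralizer_sym[OF cheb_trace_central[OF u that] rep_closed[OF that]] by (simp add: q_def)
  have x_q: "x \<in> centralizer q" and w_q: "w \<in> centralizer q"
    using u v by (simp_all add: x_def w_def q_central)
  have xw: "x \<in> scaled_centralizer q w"
    unfolding x_def w_def
    using rep_int_pows_scaled_commute[OF q q_central u v cheb_scaled_commute[OF u v rel r, folded q_def]] .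
  have "x [^] s \<otimes> w [^] s = \<phi> ((u [^]\<^bsub>Gr\<^esub> n) [^]\<^bsub>Gr\<^esub> s \<otimes>\<^bsub>Gr\<^esub> (v [^]\<^bsub>Gr\<^esub> (- k)) [^]\<^bsub>Gr\<^esub> s)"
    using u v by (simp add: x_def w_def rep_mult rep_nat_pow)
  also have "\<dots> = \<phi> u"
    by (simp only: Gr.torus_meridian_pow[OF u v rel bezout])
  finally have q_m_pow: "q \<otimes> \<phi> m [^] s = q \<otimes> \<phi> u"
    using scaled_pow_mult_distrib[OF q x_q w_q xw, of s] u v
    by (simp add: m_def x_def w_def rep_mult)
  have "\<phi> (v [^]\<^bsub>Gr\<^esub> s) = q \<otimes> \<phi> u \<ominus> p'"
    using rep_pow_cheb[OF u, of "r - 1"] r u by (simp add: q_def p'_def flip: rel rep_nat_pow)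
  then have "\<phi> (v [^]\<^bsub>Gr\<^esub> s \<otimes>\<^bsub>Gr\<^esub> (inv\<^bsub>Gr\<^esub> m) [^]\<^bsub>Gr\<^esub> (r * s))
      = (q \<otimes> \<phi> m [^] s \<oplus> \<ominus> p') \<otimes> \<phi> (inv\<^bsub>Gr\<^esub> m) [^] (r * s)"
    using v m_carrier by (simp add: rep_mult rep_nat_pow q_m_pow minus_eq)
  moreover have "q \<in> S" "p' \<in> S"
    using S trace_u by (simp_all add: q_def p'_def cheb_mem_subring)
  ultimately show ?thesis
    using S m m_inv by (simp add: subringE subring_nat_pow_closed)
qed

end

section \<open>The Brumfiel--Hilden condition for torus knots\<close>

context group
begin

lemma bh_class_central_trace_rep: "central_trace_rep bh_quot G (\<lambda>g. bh_class G (ga_delta g))"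
proof (intro central_trace_rep.intro central_trace_rep_axioms.intro)
  show "ring bh_quot" by (rule bh_quot_is_ring)
  show "group G" by (rule is_group)
  show "bh_class G (ga_delta \<one>) = \<one>\<^bsub>bh_quot\<^esub>" by (simp flip: bh_one_eq add: bh_one_def)
  fix g h assume g: "g \<in> carrier G" and h: "h \<in> carrier G"
  show "bh_class G (ga_delta g) \<in> carrier bh_quot"
    using g by (simp add: bh_class_closed ga_delta_closed)
  show "bh_class G (ga_delta (g \<otimes> h)) = bh_class G (ga_delta g) \<otimes>\<^bsub>bh_quot\<^esub> bh_class G (ga_delta h)"
    using g h by (rule bh_class_delta_mult)
  show "bh_class G (ga_delta g) \<oplus>\<^bsub>bh_quot\<^esub> bh_class G (ga_delta (inv g))
      \<in> ring.centralizer bh_quot (bh_class G (ga_delta h))"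
    using bh_class_plusinv_central[OF g h] g h
    by (simp add: ring.centralizer_def[OF bh_quot_is_ring] bh_class_closed ga_plusinv_closed
        flip: bh_class_plusinv)
qed

lemma bh_condition_if_torus_relation:
  fixes r s :: nat and n k :: int
  assumes u: "u \<in> carrier G" and v: "v \<in> carrier G"
    and rel: "u [^] r = v [^] s" and r: "1 \<le> r" and bezout: "int s * n - int r * k = 1"
  shows "bh_condition G (u [^] n \<otimes> v [^] (- k)) (v [^] s \<otimes> (inv (u [^] n \<otimes> v [^] (- k))) [^] (r * s))"
proof -
  interpret rep: central_trace_rep bh_quot G "\<lambda>g. bh_class G (ga_delta g)"
    by (rule bh_class_central_trace_rep)
  define m where "m = u [^] n \<otimes> v [^] (- k)"
  define T where "T = bh_plus G \<union> {bh_class G (ga_delta m), bh_class G (ga_delta (inv m))}"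
  define S where "S = bh_subalg G T \<inter> carrier bh_quot"
  have m_carrier: "m \<in> carrier G" using u v by (simp add: m_def)
  have gen_mem: "A \<in> S" if "A \<in> T" "A \<in> carrier bh_quot" for A
    using that by (simp add: S_def bh_subalg_def alg_gen.gen)
  have "bh_class G (ga_plusinv G u) \<in> bh_plus G"
    using u by (auto simp: bh_plus_def bh_subalg_def intro: alg_gen.gen)
  then have tr: "rep.trace u \<in> S"
    using u by (simp add: T_def gen_mem bh_class_closed ga_plusinv_closed flip: bh_class_plusinv)
  have m_mem: "bh_class G (ga_delta m) \<in> S" and m_inv_mem: "bh_class G (ga_delta (inv m)) \<in> S"
    using m_carrier by (simp_all add: T_def gen_mem bh_class_closed ga_delta_closed)
  have "subring S bh_quot"
    unfolding S_def by (rule bh_subalg_subring)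
  from rep.longitude_rep_mem_subring[OF u v rel r bezout this tr
      m_mem[unfolded m_def] m_inv_mem[unfolded m_def]]
  have "bh_class G (ga_delta (v [^] s \<otimes> (inv m) [^] (r * s))) \<in> S"
    by (simp add: m_def)
  then show ?thesis
    by (simp add: bh_condition_def S_def T_def m_def)
qed

end

theorem theorem5p1:
  fixes r s :: nat and k n :: int
  assumes "2 \<le> r" and "r < s" and "coprime r s"
    and "- int r * k + int s * n = 1"
  shows "bh_condition (torus_knot_group r s)
           (tk_class r s (tk_meridian_word k n))
           (tk_class r s (tk_longitude_word r s k n))"
proof -
  interpret group "TK r s" by (rule torus_knot_group_is_group)
  have "int s * n - int r * k = 1" using assms(4) by simp
  then show ?thesis
    using bh_condition_if_torus_relation[OF _ _ tk_defining_relation] assms(1)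
    by (simp add: tk_meridian_class tk_longitude_class tk_carrier)
qed

end
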